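(* Let $A$ be a countable non-empty set of players, $C$ a finite non-empty set of choices, $d:C^*\to A$, and for each $a\in A$ let $f_a:C^\omega\to[0,1]$ be upper semi-continuous (with respect to the product of discrete topologies on $C^\omega$). Then the infinite sequential game $\langle A,C,d,(f_a)_{a\in A}\rangle$ has a Nash equilibrium.
   Context: A strategy of $a$ is a function $s_a:d^{-1}(\{a\})\to C$; a profile is identified with $\sigma:C^*\to C$, inducing the play $p(\sigma)$ with $p_n=\sigma(p_{<n})$. $\sigma_{a\mapsto s_a}$ agrees with $s_a$ on $d^{-1}(\{a\})$ and with $\sigma$ elsewhere. $\sigma$ is a Nash equilibrium if there is no player $a$ and strategy $s_a$ with $f_a(p(\sigma))<f_a(p(\sigma_{a\mapsto s_a}))$. *)

theory Defs
  imports "HOL-Analysis.Analysis"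
begin

definition play_topology :: "(nat \<Rightarrow> 'c) topology" where
  "play_topology = product_topology (\<lambda>_. discrete_topology (UNIV :: 'c set)) UNIV"

definition upper_semicontinuous_map :: "'x topology \<Rightarrow> ('x \<Rightarrow> real) \<Rightarrow> bool" where
  "upper_semicontinuous_map X f \<longleftrightarrow> (\<forall>t. openin X {x \<in> topspace X. f x < t})"

fun hist :: "('c list \<Rightarrow> 'c) \<Rightarrow> nat \<Rightarrow> 'c list" where
  "hist \<sigma> 0 = []"
| "hist \<sigma> (Suc n) = hist \<sigma> n @ [\<sigma> (hist \<sigma> n)]"

definition play :: "('c list \<Rightarrow> 'c) \<Rightarrow> nat \<Rightarrow> 'c" where
  "play \<sigma> n = \<sigma> (hist \<sigma> n)"

definition deviate :: "('c list \<Rightarrow> 'a) \<Rightarrow> ('c list \<Rightarrow> 'c) \<Rightarrow> 'a \<Rightarrow> ('c list \<Rightarrow> 'c) \<Rightarrow> ('c list \<Rightarrow> 'c)" where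
  "deviate d \<sigma> a s = (\<lambda>h. if d h = a then s h else \<sigma> h)"

definition nash_equilibrium ::
  "('c list \<Rightarrow> 'a) \<Rightarrow> ('a \<Rightarrow> (nat \<Rightarrow> 'c) \<Rightarrow> real) \<Rightarrow> ('c list \<Rightarrow> 'c) \<Rightarrow> bool" where
  "nash_equilibrium d f \<sigma> \<longleftrightarrow>
     \<not> (\<exists>a s. f a (play \<sigma>) < f a (play (deviate d \<sigma> a s)))"

end

theory Submission
  imports Defs
begin

text \<open>For a player \<open>a\<close>, consider the win-lose games in which \<open>a\<close> tries to secure a payoff
  above \<open>w\<close> while the others try to hold it down to \<open>v\<close>.  Upper semicontinuity makes the plays with
  \<open>f a < t\<close> an open set, and an attractor argument with thresholds \<open>t\<close> decreasing to \<open>w\<close> shows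
  that whenever \<open>a\<close> cannot secure more than \<open>w\<close>, the others can hold \<open>a\<close> to at most \<open>w\<close>.
  Hence \<open>a\<close> has a strategy along whose plays every history can be punished down to the payoff of
  the play itself.  Let every player follow such a strategy, producing a play \<open>p\<close>; the profile that
  follows \<open>p\<close> and, after a first deviation by \<open>a\<close>, lets the others hold \<open>a\<close> to \<open>f a p\<close> is
  a Nash equilibrium.\<close>

section \<open>Histories and cylinders\<close>

definition take_seq :: "nat \<Rightarrow> (nat \<Rightarrow> 'c) \<Rightarrow> 'c list" where
  "take_seq n q = map q [0..<n]"

definition extends :: "(nat \<Rightarrow> 'c) \<Rightarrow> 'c list \<Rightarrow> bool" where
  "extends q g \<longleftrightarrow> take_seq (length g) q = g"

lemma length_take_seq [simp]: "length (take_seq n q) = n"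
  by (simp add: take_seq_def)

lemma nth_take_seq [simp]: "i < n \<Longrightarrow> take_seq n q ! i = q i"
  by (simp add: take_seq_def)

lemma take_seq_0 [simp]: "take_seq 0 q = []"
  by (simp add: take_seq_def)

lemma take_seq_Suc: "take_seq (Suc n) q = take_seq n q @ [q n]"
  by (simp add: take_seq_def)

lemma take_take_seq [simp]: "m \<le> n \<Longrightarrow> take m (take_seq n q) = take_seq m q"
  by (auto intro!: nth_equalityI)

lemma take_seq_eq_iff: "take_seq n q = take_seq n q' \<longleftrightarrow> (\<forall>i<n. q i = q' i)"
  by (auto simp: list_eq_iff_nth_eq)

lemma extends_Nil [simp]: "extends q []"
  by (simp add: extends_def)

lemma extends_take_seq [simp]: "extends q (take_seq n q)"
  by (simp add: extends_def)

lemma extends_take_seq_iff: "extends q' (take_seq n q) \<longleftrightarrow> (\<forall>i<n. q' i = q i)"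
  by (simp add: extends_def take_seq_eq_iff)

lemma extends_snoc: "extends q (g @ [c]) \<longleftrightarrow> extends q g \<and> q (length g) = c"
  by (auto simp: extends_def take_seq_Suc)

lemma hist_eq_take_seq: "hist \<sigma> n = take_seq n (play \<sigma>)"
  by (induction n) (simp_all add: take_seq_Suc play_def)

lemma play_eq: "play \<sigma> n = \<sigma> (take_seq n (play \<sigma>))"
  by (simp add: play_def hist_eq_take_seq)

lemma exists_play_from:
  "\<exists>q. extends q g \<and> (\<forall>j\<ge>length g. q j = \<rho> (take_seq j q))"
proof -
  define q where "q = play (\<lambda>h. if length h < length g then g ! length h else \<rho> h)"
  have q: "q j = (if j < length g then g ! j else \<rho> (take_seq j q))" for j
  proof -
    have "q j = (\<lambda>h. if length h < length g then g ! length h else \<rho> h) (take_seq j q)"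
      unfolding q_def by (rule play_eq)
    then show ?thesis
      by simp
  qed
  have "extends q g"
    unfolding extends_def by (rule nth_equalityI) (simp_all add: q)
  then show ?thesis
    using q by auto
qed

lemma upper_semicontinuous_cylinder:
  assumes "upper_semicontinuous_map play_topology F" and "F q < t"
  shows "\<exists>n. \<forall>q'. extends q' (take_seq n q) \<longrightarrow> F q' < t"
proof -
  have "openin (product_topology (\<lambda>_. discrete_topology UNIV) UNIV) {x. F x < t}"
    using assms(1) by (simp add: upper_semicontinuous_map_def play_topology_def)
  moreover have "q \<in> {x. F x < t}"
    using assms(2) by simp
  ultimately have "\<exists>U. finite {i \<in> UNIV. U i \<noteq> topspace (discrete_topology UNIV)} \<and>
      (\<forall>i \<in> UNIV. openin (discrete_topology UNIV) (U i)) \<and>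
      q \<in> PiE UNIV U \<and> PiE UNIV U \<subseteq> {x. F x < t}"
    unfolding openin_product_topology_alt by (rule bspec)
  then obtain U where
    U: "finite {i. U i \<noteq> UNIV}" "q \<in> PiE UNIV U" "PiE UNIV U \<subseteq> {x. F x < t}"
    by auto
  obtain n where n: "{i. U i \<noteq> UNIV} \<subseteq> {..<n}"
    using finite_nat_bounded[OF U(1)] by blast
  have "F q' < t" if "extends q' (take_seq n q)" for q'
  proof -
    have "q' i \<in> U i" for i
    proof (cases "i < n")
      case True
      then show ?thesis
        using that U(2) by (auto simp: PiE_iff extends_take_seq_iff)
    next
      case False
      then have "U i = UNIV"
        using n by auto
      then show ?thesis
        by simp
    qed
    then show ?thesis
      using U(3) by (auto simp: PiE_iff)
  qed
  then show ?thesis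
    by blast
qed

section \<open>Win-lose games on the tree of histories\<close>

text \<open>A win-lose game is given by the set \<open>P\<close> of positions owned by the player under
  consideration, all other positions being owned by the adversary, and by a winning set \<open>R\<close>.\<close>
definition conforms :: "('c list \<Rightarrow> bool) \<Rightarrow> ('c list \<Rightarrow> 'c) \<Rightarrow> 'c list \<Rightarrow> (nat \<Rightarrow> 'c) \<Rightarrow> bool" where
  "conforms P \<sigma> g q \<longleftrightarrow> extends q g \<and> (\<forall>j\<ge>length g. P (take_seq j q) \<longrightarrow> q j = \<sigma> (take_seq j q))"

definition forces :: "('c list \<Rightarrow> bool) \<Rightarrow> ((nat \<Rightarrow> 'c) \<Rightarrow> bool) \<Rightarrow> 'c list \<Rightarrow> bool" where
  "forces P R g \<longleftrightarrow> (\<exists>\<sigma>. \<forall>q. conforms P \<sigma> g q \<longrightarrow> R q)"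

lemma conforms_iff_snoc:
  "conforms P \<sigma> g q \<longleftrightarrow>
     extends q g \<and> (P g \<longrightarrow> q (length g) = \<sigma> g) \<and> conforms P \<sigma> (g @ [q (length g)]) q"
proof -
  have split: "(\<forall>j\<ge>n. A j) \<longleftrightarrow> A n \<and> (\<forall>j\<ge>Suc n. A j)" for n and A :: "nat \<Rightarrow> bool"
    by (metis Suc_le_eq order.order_iff_strict)
  show ?thesis
    unfolding conforms_def extends_snoc split[of "length g"]
    by (auto simp: extends_def)
qed

lemma conforms_snoc_imp:
  assumes "conforms P \<sigma> (g @ [c]) q" and "P g \<Longrightarrow> c = \<sigma> g"
  shows "conforms P \<sigma> g q"
proof -
  have "extends q g" and "q (length g) = c"
    using assms(1) by (auto simp: conforms_def extends_snoc)
  then show ?thesis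
    using assms by (simp add: conforms_iff_snoc[of P \<sigma> g q])
qed

lemma conforms_cong:
  "(\<And>j. length g \<le> j \<Longrightarrow> \<sigma> (take_seq j q) = \<sigma>' (take_seq j q)) \<Longrightarrow>
     conforms P \<sigma> g q \<longleftrightarrow> conforms P \<sigma>' g q"
  by (simp add: conforms_def)

lemma exists_conforming_play: "\<exists>q. conforms P \<sigma> g q \<and> conforms (\<lambda>x. \<not> P x) \<tau> g q"
  using exists_play_from[of g "\<lambda>x. if P x then \<sigma> x else \<tau> x"] by (auto simp: conforms_def)

lemma forces_snoc_own:
  assumes "P g" and "forces P R (g @ [c])"
  shows "forces P R g"
proof -
  obtain \<sigma> where \<sigma>: "\<And>q. conforms P \<sigma> (g @ [c]) q \<Longrightarrow> R q"
    using assms(2) by (auto simp: forces_def)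
  have "conforms P \<sigma> (g @ [c]) q" if "conforms P (\<sigma>(g := c)) g q" for q
  proof -
    have "conforms P (\<sigma>(g := c)) (g @ [c]) q"
      using conforms_iff_snoc[THEN iffD1, OF that] assms(1) by auto
    moreover have "take_seq j q \<noteq> g" if "length (g @ [c]) \<le> j" for j
      using that by auto
    ultimately show ?thesis
      using conforms_cong[of "g @ [c]" "\<sigma>(g := c)" q \<sigma>] by simp
  qed
  then show ?thesis
    using \<sigma> by (auto simp: forces_def)
qed

lemma forces_all_snoc:
  assumes "\<not> P g" and "\<And>c. forces P R (g @ [c])"
  shows "forces P R g"
proof -
  obtain T where T: "\<And>c q. conforms P (T c) (g @ [c]) q \<Longrightarrow> R q"
    using assms(2) unfolding forces_def by metis
  have "R q" if "conforms P (\<lambda>h. T (h ! length g) h) g q" for q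
  proof -
    have "conforms P (\<lambda>h. T (h ! length g) h) (g @ [q (length g)]) q"
      using conforms_iff_snoc[THEN iffD1, OF that] by blast
    moreover have "take_seq j q ! length g = q (length g)"
      if "length (g @ [q (length g)]) \<le> j" for j
      using that by simp
    ultimately have "conforms P (T (q (length g))) (g @ [q (length g)]) q"
      using conforms_cong[of "g @ [q (length g)]" "\<lambda>h. T (h ! length g) h" q "T (q (length g))"]
      by simp
    then show ?thesis
      by (rule T)
  qed
  then show ?thesis
    by (auto simp: forces_def)
qed

lemma forces_snoc_other:
  assumes "\<not> P g" and "forces P R g"
  shows "forces P R (g @ [c])"
proof -
  obtain \<sigma> where \<sigma>: "\<And>q. conforms P \<sigma> g q \<Longrightarrow> R q"
    using assms(2) by (auto simp: forces_def)
  have "conforms P \<sigma> g q" if "conforms P \<sigma> (g @ [c]) q" for q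
    using conforms_snoc_imp[OF that] assms(1) by simp
  then show ?thesis
    using \<sigma> by (auto simp: forces_def)
qed

section \<open>Uniform winning strategies\<close>

context
  fixes P :: "'c list \<Rightarrow> bool" and R :: "(nat \<Rightarrow> 'c) \<Rightarrow> bool"
begin

definition chosen_strategy :: "'c list \<Rightarrow> 'c list \<Rightarrow> 'c" where
  "chosen_strategy g = (SOME \<sigma>. \<forall>q. conforms P \<sigma> g q \<longrightarrow> R q)"

lemma chosen_strategy_wins:
  assumes "forces P R g" and "conforms P (chosen_strategy g) g q"
  shows "R q"
proof -
  have "\<forall>q. conforms P (chosen_strategy g) g q \<longrightarrow> R q"
    using assms(1) unfolding forces_def chosen_strategy_def by (rule someI_ex)
  then show ?thesis
    using assms(2) by blast
qed

text \<open>The uniform strategy plays the strategy chosen at the earliest winning position whose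
  chosen strategy has been obeyed ever since; along a play from a winning position this earliest
  position never changes.\<close>
definition loyal :: "(nat \<Rightarrow> 'c) \<Rightarrow> nat \<Rightarrow> nat \<Rightarrow> bool" where
  "loyal q k j \<longleftrightarrow> j \<le> k \<and> forces P R (take_seq j q) \<and>
     (\<forall>i. j \<le> i \<and> i < k \<and> P (take_seq i q) \<longrightarrow>
        q i = chosen_strategy (take_seq j q) (take_seq i q))"

definition uniform_strategy :: "'c list \<Rightarrow> 'c" where
  "uniform_strategy x = chosen_strategy (take (LEAST j. loyal ((!) x) (length x) j) x) x"

lemma loyal_take_seq: "loyal ((!) (take_seq k q)) k j \<longleftrightarrow> loyal q k j"
proof -
  have "take_seq i ((!) (take_seq k q)) = take_seq i q" if "i \<le> k" for i
    using that by (simp add: take_seq_eq_iff)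
  then show ?thesis
    unfolding loyal_def by auto
qed

lemma loyal_Suc:
  "loyal q (Suc k) j \<longleftrightarrow>
     loyal q k j \<and> (P (take_seq k q) \<longrightarrow> q k = chosen_strategy (take_seq j q) (take_seq k q))
     \<or> j = Suc k \<and> forces P R (take_seq j q)"
  unfolding loyal_def by (auto simp: less_Suc_eq le_Suc_eq)

lemma uniform_strategy_take_seq:
  assumes "loyal q k j" and "\<And>j'. loyal q k j' \<Longrightarrow> j \<le> j'"
  shows "uniform_strategy (take_seq k q) = chosen_strategy (take_seq j q) (take_seq k q)"
proof -
  have "(LEAST j. loyal ((!) (take_seq k q)) k j) = j"
    using assms by (intro Least_equality) (auto simp: loyal_take_seq)
  moreover have "j \<le> k"
    using assms(1) by (simp add: loyal_def)
  ultimately show ?thesis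
    by (simp add: uniform_strategy_def)
qed

lemma uniform_strategy_wins:
  assumes "forces P R g" and "conforms P uniform_strategy g q"
  shows "R q"
proof -
  define j0 where "j0 = (LEAST j. loyal q (length g) j)"
  have "loyal q (length g) (length g)"
    using assms by (auto simp: loyal_def conforms_def extends_def)
  then have base: "loyal q (length g) j0 \<and> (\<forall>j. loyal q (length g) j \<longrightarrow> j0 \<le> j)"
    unfolding j0_def by (auto intro: LeastI Least_le)
  have invariant: "loyal q (length g + n) j0 \<and> (\<forall>j. loyal q (length g + n) j \<longrightarrow> j0 \<le> j)" for n
  proof (induction n)
    case 0
    then show ?case
      using base by simp
  next
    case (Suc n)
    let ?k = "length g + n"
    have "uniform_strategy (take_seq ?k q) = chosen_strategy (take_seq j0 q) (take_seq ?k q)"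
      using Suc.IH by (intro uniform_strategy_take_seq) auto
    then have "P (take_seq ?k q) \<Longrightarrow> q ?k = chosen_strategy (take_seq j0 q) (take_seq ?k q)"
      using assms(2) by (simp add: conforms_def)
    moreover have "j0 \<le> ?k"
      using Suc.IH by (simp add: loyal_def)
    ultimately show ?case
      using Suc.IH by (auto simp: loyal_Suc)
  qed
  have "q i = chosen_strategy (take_seq j0 q) (take_seq i q)" if "j0 \<le> i" "P (take_seq i q)" for i
    using invariant[of "Suc i"] that by (auto simp: loyal_def)
  then have "conforms P (chosen_strategy (take_seq j0 q)) (take_seq j0 q) q"
    by (simp add: conforms_def)
  moreover have "forces P R (take_seq j0 q)"
    using base by (simp add: loyal_def)
  ultimately show ?thesis
    by (rule chosen_strategy_wins[rotated])
qed

lemma forces_snoc_uniform_strategy: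
  assumes "P g" and "forces P R g"
  shows "forces P R (g @ [uniform_strategy g])"
proof -
  have "R q" if "conforms P uniform_strategy (g @ [uniform_strategy g]) q" for q
    using uniform_strategy_wins[OF assms(2) conforms_snoc_imp[OF that refl]] .
  then show ?thesis
    unfolding forces_def by blast
qed

lemma uniform_strategy_wins_from_prefix:
  assumes "conforms P \<sigma> g q"
    and "\<And>x. P x \<Longrightarrow> forces P R x \<Longrightarrow> \<sigma> x = uniform_strategy x"
    and "length g \<le> k" and "forces P R (take_seq k q)"
  shows "R q"
proof -
  have winning: "forces P R (take_seq (k + i) q)" for i
  proof (induction i)
    case 0
    then show ?case
      using assms(4) by simp
  next
    case (Suc i)
    let ?x = "take_seq (k + i) q"
    have "P ?x \<Longrightarrow> q (k + i) = uniform_strategy ?x"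
      using assms(1-3) Suc.IH by (simp add: conforms_def)
    then show ?case
      using Suc.IH forces_snoc_uniform_strategy forces_snoc_other
      by (cases "P ?x") (auto simp: take_seq_Suc)
  qed
  have "q j = uniform_strategy (take_seq j q)" if "k \<le> j" "P (take_seq j q)" for j
    using that assms(1-3) winning[of "j - k"] by (simp add: conforms_def)
  then have "conforms P (uniform_strategy) (take_seq k q) q"
    by (simp add: conforms_def)
  then show ?thesis
    using assms(4) by (rule uniform_strategy_wins[rotated])
qed

end

section \<open>Punishment and the grim trigger profile\<close>

locale sequential_game =
  fixes d :: "'c list \<Rightarrow> 'a" and f :: "'a \<Rightarrow> (nat \<Rightarrow> 'c) \<Rightarrow> real"
begin

definition punishable :: "'a \<Rightarrow> 'c list \<Rightarrow> real \<Rightarrow> bool" where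
  "punishable a g v \<longleftrightarrow> forces (\<lambda>x. d x \<noteq> a) (\<lambda>q. f a q \<le> v) g"

definition secures :: "'a \<Rightarrow> 'c list \<Rightarrow> real \<Rightarrow> bool" where
  "secures a g w \<longleftrightarrow> forces (\<lambda>x. d x = a) (\<lambda>q. w < f a q) g"

lemma punishable_mono: "punishable a g v \<Longrightarrow> v \<le> v' \<Longrightarrow> punishable a g v'"
  unfolding punishable_def forces_def by (meson order_trans)

lemma not_secures_if_punishable:
  assumes "punishable a g w"
  shows "\<not> secures a g w"
proof
  assume "secures a g w"
  then obtain \<sigma> where \<sigma>: "\<And>q. conforms (\<lambda>x. d x = a) \<sigma> g q \<Longrightarrow> w < f a q"
    by (auto simp: secures_def forces_def)
  obtain \<tau> where \<tau>: "\<And>q. conforms (\<lambda>x. d x \<noteq> a) \<tau> g q \<Longrightarrow> f a q \<le> w"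
    using assms by (auto simp: punishable_def forces_def)
  obtain q where "conforms (\<lambda>x. d x = a) \<sigma> g q" "conforms (\<lambda>x. d x \<noteq> a) \<tau> g q"
    using exists_conforming_play by blast
  then show False
    using \<sigma> \<tau> by fastforce
qed

lemma punishable_snoc_other: "d g \<noteq> a \<Longrightarrow> punishable a (g @ [c]) v \<Longrightarrow> punishable a g v"
  unfolding punishable_def by (rule forces_snoc_own)

lemma punishable_all_snoc: "d g = a \<Longrightarrow> (\<And>c. punishable a (g @ [c]) v) \<Longrightarrow> punishable a g v"
  unfolding punishable_def by (rule forces_all_snoc) simp_all

lemma punishable_snoc_own: "d g = a \<Longrightarrow> punishable a g v \<Longrightarrow> punishable a (g @ [c]) v"
  unfolding punishable_def by (rule forces_snoc_other) simp_all

lemma secures_snoc_own: "d g = a \<Longrightarrow> secures a (g @ [c]) w \<Longrightarrow> secures a g w"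
  unfolding secures_def by (rule forces_snoc_own)

lemma secures_all_snoc: "d g \<noteq> a \<Longrightarrow> (\<And>c. secures a (g @ [c]) w) \<Longrightarrow> secures a g w"
  unfolding secures_def by (rule forces_all_snoc) simp_all

definition first_deviation :: "(nat \<Rightarrow> 'c) \<Rightarrow> 'c list \<Rightarrow> nat" where
  "first_deviation p x = (LEAST i. x ! i \<noteq> p i)"

text \<open>Off the path of \<open>p\<close>, the deviator is the owner of the last history on the path.\<close>
definition grim_trigger :: "(nat \<Rightarrow> 'c) \<Rightarrow> 'c list \<Rightarrow> 'c" where
  "grim_trigger p x =
     (if x = take_seq (length x) p then p (length x)
      else let g = take (Suc (first_deviation p x)) x; a = d (butlast g) in
        chosen_strategy (\<lambda>y. d y \<noteq> a) (\<lambda>q. f a q \<le> f a p) g x)"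

lemma play_grim_trigger: "play (grim_trigger p) = p"
proof -
  have "hist (grim_trigger p) n = take_seq n p" for n
    by (induction n) (simp_all add: take_seq_Suc grim_trigger_def)
  then show ?thesis
    by (auto simp: play_def grim_trigger_def)
qed

lemma grim_trigger_after_deviation:
  assumes "take_seq n q = take_seq n p" and "q n \<noteq> p n" and "n < j"
  defines "a \<equiv> d (take_seq n p)"
  shows "grim_trigger p (take_seq j q) =
    chosen_strategy (\<lambda>y. d y \<noteq> a) (\<lambda>q. f a q \<le> f a p) (take_seq (Suc n) q) (take_seq j q)"
proof -
  have agree: "q i = p i" if "i < n" for i
    using assms(1) that by (simp add: take_seq_eq_iff)
  have "first_deviation p (take_seq j q) = n"
    unfolding first_deviation_def
    by (rule Least_equality) (use assms(2,3) agree in \<open>auto simp: not_less[symmetric]\<close>)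
  moreover have "take_seq j q \<noteq> take_seq j p"
    using assms(2,3) by (auto simp: take_seq_eq_iff)
  moreover have "butlast (take_seq (Suc n) q) = take_seq n p"
    using assms(1) by (simp add: take_seq_Suc)
  ultimately show ?thesis
    using assms(3) by (simp add: grim_trigger_def a_def Let_def)
qed

lemma nash_equilibrium_grim_trigger:
  assumes "\<And>k c. punishable (d (take_seq k p)) (take_seq k p @ [c]) (f (d (take_seq k p)) p)"
  shows "nash_equilibrium d f (grim_trigger p)"
  unfolding nash_equilibrium_def play_grim_trigger
proof (intro notI, elim exE)
  fix a s
  define q where "q = play (deviate d (grim_trigger p) a s)"
  assume "f a p < f a (play (deviate d (grim_trigger p) a s))"
  then have better: "f a p < f a q"
    by (simp add: q_def)
  have q: "q j = deviate d (grim_trigger p) a s (take_seq j q)" for j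
    unfolding q_def by (rule play_eq)
  have "\<exists>n. q n \<noteq> p n"
    using better by (metis less_irrefl ext)
  then obtain n where n: "q n \<noteq> p n" "\<forall>i<n. q i = p i"
    unfolding exists_least_iff[of "\<lambda>n. q n \<noteq> p n"] by auto
  then have prefix: "take_seq n q = take_seq n p"
    by (simp add: take_seq_eq_iff)
  have own: "d (take_seq n p) = a"
  proof (rule ccontr)
    assume "d (take_seq n p) \<noteq> a"
    then have "q n = grim_trigger p (take_seq n p)"
      using q[of n] prefix by (simp add: deviate_def)
    then show False
      using n(1) by (simp add: grim_trigger_def)
  qed
  let ?g = "take_seq (Suc n) q"
  let ?punish = "chosen_strategy (\<lambda>y. d y \<noteq> a) (\<lambda>q. f a q \<le> f a p) ?g"
  have "q j = ?punish (take_seq j q)" if "Suc n \<le> j" and "d (take_seq j q) \<noteq> a" for j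
    using q[of j] that grim_trigger_after_deviation[OF prefix n(1), of j] own
    by (simp add: deviate_def)
  then have "conforms (\<lambda>y. d y \<noteq> a) ?punish ?g q"
    by (simp add: conforms_def)
  moreover have "punishable a ?g (f a p)"
    using assms[of n "q n"] prefix own by (simp add: take_seq_Suc)
  ultimately have "f a q \<le> f a p"
    unfolding punishable_def by (rule chosen_strategy_wins[rotated])
  then show False
    using better by simp
qed

section \<open>Determinacy of the threshold games\<close>

definition below_on_cylinder :: "'a \<Rightarrow> 'c list \<Rightarrow> real \<Rightarrow> bool" where
  "below_on_cylinder a g t \<longleftrightarrow> (\<forall>q. extends q g \<longrightarrow> f a q < t)"

lemma punishable_if_below_on_cylinder: "below_on_cylinder a g t \<Longrightarrow> punishable a g t"
  unfolding punishable_def forces_def below_on_cylinder_def conforms_def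
  by (auto intro: less_imp_le)

lemma below_on_cylinder_mono:
  "below_on_cylinder a (take_seq n q) t \<Longrightarrow> n \<le> m \<Longrightarrow> below_on_cylinder a (take_seq m q) t"
  unfolding below_on_cylinder_def extends_take_seq_iff by auto

text \<open>Positions from which the others can steer the play, within \<open>n\<close> moves and through positions
  where \<open>a\<close> cannot secure more than \<open>w\<close>, into a cylinder on which \<open>f a\<close> stays below \<open>t\<close>.\<close>
primrec attractor :: "'a \<Rightarrow> real \<Rightarrow> real \<Rightarrow> nat \<Rightarrow> 'c list set" where
  "attractor a w t 0 = {g. below_on_cylinder a g t}"
| "attractor a w t (Suc n) = attractor a w t n \<union>
     {g. if d g = a then \<forall>c. g @ [c] \<in> attractor a w t n
         else \<exists>c. \<not> secures a (g @ [c]) w \<and> g @ [c] \<in> attractor a w t n}"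

lemma attractor_mono: "n \<le> m \<Longrightarrow> attractor a w t n \<subseteq> attractor a w t m"
  by (induction m rule: dec_induct) auto

end

locale usc_game = sequential_game d f
  for d :: "'c::finite list \<Rightarrow> 'a" and f :: "'a \<Rightarrow> (nat \<Rightarrow> 'c) \<Rightarrow> real" +
  assumes usc: "\<And>a. upper_semicontinuous_map play_topology (f a)"
begin

lemma eventually_below_on_cylinder: "f a q < t \<Longrightarrow> \<exists>n. below_on_cylinder a (take_seq n q) t"
  unfolding below_on_cylinder_def using upper_semicontinuous_cylinder[OF usc] by blast

definition escape :: "'a \<Rightarrow> real \<Rightarrow> real \<Rightarrow> 'c list \<Rightarrow> 'c" where
  "escape a w t x = (SOME c. \<forall>n. x @ [c] \<notin> attractor a w t n)"

lemma escape_attractor: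
  assumes "\<And>n. x \<notin> attractor a w t n" and "d x = a"
  shows "x @ [escape a w t x] \<notin> attractor a w t n"
proof -
  have "\<exists>c. \<forall>n. x @ [c] \<notin> attractor a w t n"
  proof (rule ccontr)
    assume "\<nexists>c. \<forall>n. x @ [c] \<notin> attractor a w t n"
    then obtain N where N: "\<And>c. x @ [c] \<in> attractor a w t (N c)"
      by metis
    have "x @ [c] \<in> attractor a w t (Max (range N))" for c
    proof -
      have "N c \<le> Max (range N)"
        by (rule Max_ge) auto
      then show ?thesis
        using N attractor_mono by blast
    qed
    then have "x \<in> attractor a w t (Suc (Max (range N)))"
      using assms(2) by simp
    then show False
      using assms(1) by blast
  qed
  then have "\<forall>n. x @ [escape a w t x] \<notin> attractor a w t n"
    unfolding escape_def by (rule someI_ex)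
  then show ?thesis
    by blast
qed

lemma outside_attractor_along:
  assumes q: "conforms (\<lambda>x. d x = a) \<sigma> g q"
    and escaping: "\<And>x. d x = a \<Longrightarrow> \<not> secures a x w \<Longrightarrow> \<sigma> x = escape a w t x"
    and outside: "\<And>n. g \<notin> attractor a w t n"
    and not_securing: "\<And>k. length g \<le> k \<Longrightarrow> \<not> secures a (take_seq k q) w"
  shows "take_seq (length g + i) q \<notin> attractor a w t n"
proof (induction i arbitrary: n)
  case 0
  then show ?case
    using q outside by (simp add: conforms_def extends_def)
next
  case (Suc i)
  let ?x = "take_seq (length g + i) q"
  let ?c = "q (length g + i)"
  have "?x @ [?c] \<notin> attractor a w t n"
  proof (cases "d ?x = a")
    case True
    then have "?c = escape a w t ?x"
      using q escaping not_securing by (simp add: conforms_def)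
    then show ?thesis
      using escape_attractor[OF Suc.IH True] by simp
  next
    case False
    have "\<not> secures a (?x @ [?c]) w"
      using not_securing[of "Suc (length g + i)"] by (simp add: take_seq_Suc)
    then have "?x @ [?c] \<in> attractor a w t n \<Longrightarrow> ?x \<in> attractor a w t (Suc n)"
      using False by auto
    then show ?thesis
      using Suc.IH by blast
  qed
  then show ?case
    by (simp add: take_seq_Suc)
qed

lemma in_attractor_if_not_secures:
  assumes "w < t" and "\<not> secures a g w"
  shows "\<exists>n. g \<in> attractor a w t n"
proof (rule ccontr)
  assume outside: "\<nexists>n. g \<in> attractor a w t n"
  let ?P = "\<lambda>x. d x = a" and ?R = "\<lambda>q. w < f a q"
  define s where "s x = (if secures a x w then uniform_strategy ?P ?R x else escape a w t x)" for x
  have "w < f a q" if q: "conforms ?P s g q" for q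
  proof (cases "\<exists>k\<ge>length g. secures a (take_seq k q) w")
    case True
    then show ?thesis
      using uniform_strategy_wins_from_prefix[where R = ?R, OF q] by (auto simp: s_def secures_def)
  next
    case False
    then have "take_seq (length g + i) q \<notin> attractor a w t 0" for i
      using outside by (intro outside_attractor_along[OF q]) (auto simp: s_def)
    then have never_below: "\<not> below_on_cylinder a (take_seq (length g + i) q) t" for i
      by simp
    show ?thesis
    proof (rule ccontr)
      assume "\<not> w < f a q"
      then obtain i where "below_on_cylinder a (take_seq i q) t"
        using eventually_below_on_cylinder assms(1) by fastforce
      then show False
        using never_below below_on_cylinder_mono le_add2 by blast
    qed
  qed
  then show False
    using assms(2) by (auto simp: secures_def forces_def)
qed

definition attractor_rank :: "'a \<Rightarrow> real \<Rightarrow> real \<Rightarrow> 'c list \<Rightarrow> nat" where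
  "attractor_rank a w t x = (LEAST n. x \<in> attractor a w t n)"

lemma attractor_rank_decreases:
  assumes "w < t" and "\<not> secures a x w" and "\<not> below_on_cylinder a x t"
  shows "d x = a \<Longrightarrow> attractor_rank a w t (x @ [c]) < attractor_rank a w t x"
    and "d x \<noteq> a \<Longrightarrow>
      \<exists>c. \<not> secures a (x @ [c]) w \<and> attractor_rank a w t (x @ [c]) < attractor_rank a w t x"
proof -
  let ?rank = "attractor_rank a w t"
  have "x \<in> attractor a w t (?rank x)"
    using in_attractor_if_not_secures[OF assms(1,2)] unfolding attractor_rank_def by (metis LeastI)
  moreover have "?rank x \<noteq> 0"
    using calculation assms(3) by (metis attractor.simps(1) mem_Collect_eq)
  then obtain r where r: "?rank x = Suc r"
    using not0_implies_Suc by blast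
  moreover have "x \<notin> attractor a w t r"
    using r unfolding attractor_rank_def by (metis Least_le Suc_n_not_le_n)
  ultimately have "if d x = a then \<forall>c. x @ [c] \<in> attractor a w t r
      else \<exists>c. \<not> secures a (x @ [c]) w \<and> x @ [c] \<in> attractor a w t r"
    by simp
  moreover have "?rank y < ?rank x" if "y \<in> attractor a w t r" for y
    using that r unfolding attractor_rank_def by (metis Least_le less_Suc_eq_le)
  ultimately show "d x = a \<Longrightarrow> ?rank (x @ [c]) < ?rank x"
    and "d x \<noteq> a \<Longrightarrow> \<exists>c. \<not> secures a (x @ [c]) w \<and> ?rank (x @ [c]) < ?rank x"
    by auto
qed

definition threshold :: "real \<Rightarrow> nat \<Rightarrow> real" where
  "threshold w k = w + 1 / real (Suc k)"

definition level :: "'a \<Rightarrow> real \<Rightarrow> 'c list \<Rightarrow> nat" where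
  "level a w x = (LEAST k. \<not> below_on_cylinder a x (threshold w k))"

text \<open>The others keep \<open>a\<close> from securing more than \<open>w\<close> and, among such moves, descend in the
  attractor for the first threshold that is not yet enforced on the whole cylinder.  Along a play
  with \<open>w < f a q\<close> that threshold eventually stabilises, so the descent would be infinite.\<close>
definition spoiler :: "'a \<Rightarrow> real \<Rightarrow> 'c list \<Rightarrow> 'c" where
  "spoiler a w x = arg_min (\<lambda>c. attractor_rank a w (threshold w (level a w x)) (x @ [c]))
     (\<lambda>c. \<not> secures a (x @ [c]) w)"

lemma not_secures_along_spoiler:
  assumes "conforms (\<lambda>x. d x \<noteq> a) (spoiler a w) h q" and "\<not> secures a h w" and "length h \<le> k"
  shows "\<not> secures a (take_seq k q) w"
  using assms(3)
proof (induction k rule: dec_induct)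
  case base
  then show ?case
    using assms(1,2) by (simp add: conforms_def extends_def)
next
  case (step k)
  let ?x = "take_seq k q"
  show ?case
  proof (cases "d ?x = a")
    case True
    then show ?thesis
      using step.IH secures_snoc_own[OF True] by (auto simp: take_seq_Suc)
  next
    case False
    then have "q k = spoiler a w ?x"
      using assms(1) step.hyps by (simp add: conforms_def)
    moreover obtain c where "\<not> secures a (?x @ [c]) w"
      using step.IH False secures_all_snoc by blast
    then have "\<not> secures a (?x @ [spoiler a w ?x]) w"
      unfolding spoiler_def by (rule arg_min_natI)
    ultimately show ?thesis
      by (simp add: take_seq_Suc)
  qed
qed

lemma eventually_level_constant:
  assumes "w < f a q"
  shows "\<exists>K. \<forall>\<^sub>F k in sequentially.
    level a w (take_seq k q) = K \<and> \<not> below_on_cylinder a (take_seq k q) (threshold w K)"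
proof -
  have "0 < f a q - w"
    using assms by simp
  then obtain K0 where "1 / real (Suc K0) < f a q - w"
    by (rule nat_approx_posE)
  then have "\<not> f a q < threshold w K0"
    by (simp add: threshold_def)
  then have "\<not> below_on_cylinder a (take_seq k q) (threshold w K0)" for k
    unfolding below_on_cylinder_def using extends_take_seq by blast
  then have not_below:
      "\<not> below_on_cylinder a (take_seq k q) (threshold w (level a w (take_seq k q)))"
    and bounded: "level a w (take_seq k q) < Suc K0" for k
    unfolding level_def less_Suc_eq_le by (rule LeastI, rule Least_le)
  have mono: "level a w (take_seq k q) \<le> level a w (take_seq k' q)" if "k \<le> k'" for k k'
  proof -
    have "\<not> below_on_cylinder a (take_seq k q) (threshold w (level a w (take_seq k' q)))"
      using not_below[of k'] below_on_cylinder_mono[OF _ that] by blast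
    then show ?thesis
      unfolding level_def[of a w "take_seq k q"] by (rule Least_le)
  qed
  have "\<exists>J. True \<and> (\<forall>k. True \<longrightarrow> level a w (take_seq k q) \<le> level a w (take_seq J q))"
    by (rule Lattices_Big.ex_has_greatest_nat[where b = "Suc K0"]) (simp_all add: bounded)
  then obtain J where J: "\<And>k. level a w (take_seq k q) \<le> level a w (take_seq J q)"
    by blast
  have "level a w (take_seq k q) = level a w (take_seq J q) \<and>
      \<not> below_on_cylinder a (take_seq k q) (threshold w (level a w (take_seq J q)))"
    if "J \<le> k" for k
  proof -
    have "level a w (take_seq k q) = level a w (take_seq J q)"
      using J mono[OF that] by (simp add: order_antisym)
    then show ?thesis
      using not_below[of k] by simp
  qed
  then show ?thesis
    unfolding eventually_sequentially by blast
qed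

lemma attractor_rank_decreases_along_spoiler:
  assumes q: "conforms (\<lambda>x. d x \<noteq> a) (spoiler a w) h q" and "length h \<le> k"
    and "\<not> secures a (take_seq k q) w" and level: "level a w (take_seq k q) = K"
    and "\<not> below_on_cylinder a (take_seq k q) (threshold w K)"
  shows "attractor_rank a w (threshold w K) (take_seq (Suc k) q)
    < attractor_rank a w (threshold w K) (take_seq k q)"
proof -
  let ?x = "take_seq k q" and ?rank = "attractor_rank a w (threshold w K)"
  have "w < threshold w K"
    by (simp add: threshold_def)
  note decreases = attractor_rank_decreases[OF this assms(3,5)]
  show ?thesis
  proof (cases "d ?x = a")
    case True
    then show ?thesis
      using decreases(1) by (simp add: take_seq_Suc)
  next
    case False
    then obtain c where "\<not> secures a (?x @ [c]) w" and "?rank (?x @ [c]) < ?rank ?x"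
      using decreases(2) by blast
    moreover have "?rank (?x @ [spoiler a w ?x]) \<le> ?rank (?x @ [c])"
      unfolding spoiler_def level by (rule arg_min_nat_le) fact
    moreover have "q k = spoiler a w ?x"
      using q False assms(2) by (simp add: conforms_def)
    ultimately show ?thesis
      by (simp add: take_seq_Suc)
  qed
qed

lemma punishable_if_not_secures:
  assumes "\<not> secures a h w"
  shows "punishable a h w"
proof -
  have "f a q \<le> w" if q: "conforms (\<lambda>x. d x \<noteq> a) (spoiler a w) h q" for q
  proof (rule ccontr)
    assume "\<not> f a q \<le> w"
    then have "w < f a q"
      by simp
    then obtain K where "\<forall>\<^sub>F k in sequentially.
      level a w (take_seq k q) = K \<and> \<not> below_on_cylinder a (take_seq k q) (threshold w K)"
      by (rule eventually_level_constant[THEN exE])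
    moreover have "\<forall>\<^sub>F k in sequentially. length h \<le> k"
      by (rule eventually_ge_at_top)
    ultimately have "\<forall>\<^sub>F k in sequentially. length h \<le> k \<and> level a w (take_seq k q) = K \<and>
        \<not> below_on_cylinder a (take_seq k q) (threshold w K)"
      by eventually_elim simp
    then obtain J where J: "\<And>k. J \<le> k \<Longrightarrow> length h \<le> k \<and> level a w (take_seq k q) = K \<and>
        \<not> below_on_cylinder a (take_seq k q) (threshold w K)"
      unfolding eventually_sequentially by blast
    let ?rank = "\<lambda>k. attractor_rank a w (threshold w K) (take_seq k q)"
    have "?rank (J + i) + i \<le> ?rank J" for i
    proof (induction i)
      case (Suc i)
      have "?rank (Suc (J + i)) < ?rank (J + i)"
        using J[of "J + i"] not_secures_along_spoiler[OF q assms]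
        by (intro attractor_rank_decreases_along_spoiler[OF q]) simp_all
      then show ?case
        using Suc.IH by simp
    qed simp
    from this[of "Suc (?rank J)"] show False
      by simp
  qed
  then show ?thesis
    unfolding punishable_def forces_def by blast
qed

section \<open>Optimal strategies\<close>

lemma exists_value_preserving_move:
  assumes "d h = a"
  shows "\<exists>c. \<forall>v. punishable a (h @ [c]) v \<longrightarrow> punishable a h v"
proof (rule ccontr)
  assume "\<nexists>c. \<forall>v. punishable a (h @ [c]) v \<longrightarrow> punishable a h v"
  then have "\<forall>c. \<exists>v. punishable a (h @ [c]) v \<and> \<not> punishable a h v"
    by blast
  then obtain V where V: "\<forall>c. punishable a (h @ [c]) (V c) \<and> \<not> punishable a h (V c)"
    by (rule choice[THEN exE])
  have "punishable a (h @ [c]) (Max (range V))" for c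
  proof -
    have "V c \<le> Max (range V)"
      by (rule Max_ge) auto
    then show ?thesis
      using V punishable_mono by blast
  qed
  then have "punishable a h (Max (range V))"
    using assms punishable_all_snoc by blast
  moreover have "Max (range V) \<in> range V"
    by (rule Max_in) auto
  ultimately show False
    using V by force
qed

definition value_not_attained :: "'a \<Rightarrow> 'c list \<Rightarrow> real \<Rightarrow> bool" where
  "value_not_attained a h w \<longleftrightarrow> \<not> punishable a h w \<and> (\<forall>v>w. punishable a h v)"

lemma value_not_attained_unique:
  "value_not_attained a h w \<Longrightarrow> value_not_attained a h w' \<Longrightarrow> w = w'"
  unfolding value_not_attained_def by (cases w w' rule: linorder_cases) auto

text \<open>If the value of \<open>h\<close> is attained, player \<open>a\<close> keeps it by a move that does not let the
  others punish harder; otherwise \<open>a\<close> plays to secure more than the value.\<close>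
definition optimal_strategy :: "'a \<Rightarrow> 'c list \<Rightarrow> 'c" where
  "optimal_strategy a h =
     (if \<exists>w. value_not_attained a h w
      then uniform_strategy (\<lambda>x. d x = a) (\<lambda>q. (THE w. value_not_attained a h w) < f a q) h
      else SOME c. \<forall>v. punishable a (h @ [c]) v \<longrightarrow> punishable a h v)"

lemma optimal_strategy_not_attained:
  assumes "value_not_attained a h w"
  shows "optimal_strategy a h = uniform_strategy (\<lambda>x. d x = a) (\<lambda>q. w < f a q) h"
proof -
  have "(THE w. value_not_attained a h w) = w"
    using assms value_not_attained_unique by blast
  then show ?thesis
    using assms unfolding optimal_strategy_def by auto
qed

lemma punishable_optimal_move:
  assumes "d h = a" and "punishable a (h @ [optimal_strategy a h]) v"
  shows "punishable a h v"
proof (cases "\<exists>w. value_not_attained a h w")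
  case True
  then obtain w where w: "value_not_attained a h w"
    by blast
  have "secures a h w"
    using w punishable_if_not_secures by (auto simp: value_not_attained_def)
  then have "secures a (h @ [optimal_strategy a h]) w"
    using assms(1) forces_snoc_uniform_strategy optimal_strategy_not_attained[OF w]
    by (simp add: secures_def)
  then have "\<not> punishable a (h @ [optimal_strategy a h]) w"
    using not_secures_if_punishable by blast
  then have "w < v"
    using assms(2) punishable_mono[of a _ v w] by fastforce
  then show ?thesis
    using w by (simp add: value_not_attained_def)
next
  case False
  have "\<forall>v. punishable a (h @ [optimal_strategy a h]) v \<longrightarrow> punishable a h v"
    unfolding optimal_strategy_def if_not_P[OF False]
    by (rule someI_ex[OF exists_value_preserving_move[OF assms(1)]])
  then show ?thesis
    using assms(2) by blast
qed

lemma punishable_prefix_along_optimal: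
  assumes "conforms (\<lambda>x. d x = a) (optimal_strategy a) [] q"
    and "k \<le> k'" and "punishable a (take_seq k' q) v"
  shows "punishable a (take_seq k q) v"
  using assms(2,3)
proof (induction k' rule: dec_induct)
  case (step m)
  let ?x = "take_seq m q"
  have "punishable a ?x v"
  proof (cases "d ?x = a")
    case True
    then have "q m = optimal_strategy a ?x"
      using assms(1) by (simp add: conforms_def)
    then show ?thesis
      using True punishable_optimal_move step.prems by (simp add: take_seq_Suc)
  next
    case False
    then show ?thesis
      using punishable_snoc_other step.prems by (simp add: take_seq_Suc)
  qed
  then show ?case
    by (rule step.IH)
qed

lemma punishable_along_optimal:
  assumes q: "conforms (\<lambda>x. d x = a) (optimal_strategy a) [] q"
  shows "punishable a (take_seq k q) (f a q)"
proof (rule ccontr)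
  let ?w = "f a q"
  assume "\<not> punishable a (take_seq k q) ?w"
  then have not_punishable: "\<not> punishable a (take_seq n q) ?w" if "k \<le> n" for n
    using punishable_prefix_along_optimal[OF q that] by blast
  have punishable_above: "punishable a (take_seq n q) t" if above: "?w < t" for n t
  proof -
    obtain m where "below_on_cylinder a (take_seq m q) t"
      using eventually_below_on_cylinder[OF above] by blast
    then have "below_on_cylinder a (take_seq (max m n) q) t"
      by (rule below_on_cylinder_mono) simp
    then have "punishable a (take_seq (max m n) q) t"
      by (rule punishable_if_below_on_cylinder)
    then show ?thesis
      by (rule punishable_prefix_along_optimal[OF q max.cobounded2])
  qed
  have "q j = uniform_strategy (\<lambda>x. d x = a) (\<lambda>q. ?w < f a q) (take_seq j q)"
    if "k \<le> j" and "d (take_seq j q) = a" for j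
  proof -
    have "value_not_attained a (take_seq j q) ?w"
      using not_punishable[OF that(1)] punishable_above by (simp add: value_not_attained_def)
    then show ?thesis
      using q that(2) optimal_strategy_not_attained by (simp add: conforms_def)
  qed
  then have "conforms (\<lambda>x. d x = a) (uniform_strategy (\<lambda>x. d x = a) (\<lambda>q. ?w < f a q))
      (take_seq k q) q"
    by (simp add: conforms_def)
  moreover have "secures a (take_seq k q) ?w"
    using not_punishable punishable_if_not_secures by blast
  ultimately have "?w < f a q"
    unfolding secures_def by (rule uniform_strategy_wins[rotated])
  then show False
    by simp
qed

theorem exists_nash_equilibrium: "\<exists>\<sigma>. nash_equilibrium d f \<sigma>"
proof -
  define p where "p = play (\<lambda>x. optimal_strategy (d x) x)"
  have step: "optimal_strategy (d (take_seq j p)) (take_seq j p) = p j" for j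
    unfolding p_def by (rule play_eq[symmetric])
  have "conforms (\<lambda>x. d x = a) (optimal_strategy a) [] p" for a
    unfolding conforms_def using step by auto
  then have "punishable a (take_seq k p) (f a p)" for a k
    by (rule punishable_along_optimal)
  then have "punishable (d (take_seq k p)) (take_seq k p @ [c]) (f (d (take_seq k p)) p)" for k c
    by (simp add: punishable_snoc_own)
  then show ?thesis
    using nash_equilibrium_grim_trigger by blast
qed

end

theorem corollary29:
  fixes d :: "'c::finite list \<Rightarrow> 'a::countable"
    and f :: "'a \<Rightarrow> (nat \<Rightarrow> 'c) \<Rightarrow> real"
  assumes "\<And>a p. 0 \<le> f a p \<and> f a p \<le> 1"
    and "\<And>a. upper_semicontinuous_map play_topology (f a)"
  shows "\<exists>\<sigma>. nash_equilibrium d f \<sigma>"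
proof -
  interpret usc_game d f
    using assms(2) by unfold_locales
  show ?thesis
    by (rule exists_nash_equilibrium)
qed

end
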